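(* Let $K\ge1$, $\alpha\in(0,1)$, $\beta\in(0,1)$. Let $S\subseteq\{1,\dots,K\}$ be a random subset in which each node is included independently with probability $\alpha$. For distinct $j,k\in\{1,\dots,K\}$, let $h_{jk}$ be i.i.d. $\mathcal{CN}(0,1)$, independent of $S$. For $k\notin S$, define $G_k=\frac1{\alpha K}\sum_{j\in S}|h_{jk}|^2$. Define the multicasting outage event $$\mathcal{E}^{\mathrm{mc}}_{\alpha,\beta,K}=\{\exists\,k\in\{1,\dots,K\}\setminus S:\ G_k\le1-\beta\}.$$ Then $$\Pr\{\mathcal{E}^{\mathrm{mc}}_{\alpha,\beta,K}\}\le K\,\Pr\{\mathcal{E}^{\mathrm{uc}}_{\alpha,\beta,K}\},$$ where $\mathcal{E}^{\mathrm{uc}}_{\alpha,\beta,K}=\{K_1<K,\ \frac1{\alpha K}\sum_{j=1}^{K_1}g_j\le1-\beta\}$ with $K_1\sim\mathrm{Binomial}(K,\alpha)$ independent of i.i.d. mean-1 exponential random variables $g_1,g_2,\dots$. Consequently, for every $\epsilon\in(0,\beta)$, $$\Pr\{\mathcal{E}^{\mathrm{mc}}_{\alpha,\beta,K}\}\le K\left[\exp(-\alpha K\epsilon^2/4)+\exp\{\alpha K\gamma(\beta,\epsilon)\}\right],$$ where $\gamma(\beta,\epsilon)=\beta-\epsilon+(1-\epsilon)\ln\frac{1-\beta}{1-\epsilon}$.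
   Context: This event is the multicasting outage event of the paper's two-phase protocol. In phase 1, the source broadcasts at a rate that each node $k$ decodes independently with probability $\alpha$; $S$ is the set of successful nodes. In phase 2, the nodes in $S$ each transmit with power $P/(\alpha K)$ at rate $\log_2(1+(1-\beta)P/N_0)$. A node $k\notin S$ fails exactly when its effective gain $G_k$ is at most $1-\beta$. Multicasting requires every node to decode, so an outage occurs if any node not in $S$ fails. *)

theory Defs
  imports "HOL-Probability.Probability"
begin

definition CN01_distributed :: "'a measure \<Rightarrow> ('a \<Rightarrow> complex) \<Rightarrow> bool" where
  "CN01_distributed M X \<longleftrightarrow>
     distributed M lborel X (\<lambda>z. ennreal (exp (- (cmod z)\<^sup>2) / pi))"

definition gamma_fn :: "real \<Rightarrow> real \<Rightarrow> real" where
  "gamma_fn \<beta> \<epsilon> = \<beta> - \<epsilon> + (1 - \<epsilon>) * ln ((1 - \<beta>) / (1 - \<epsilon>))"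

end

(*
  A node k outside S fails only if, with A = S, the sum of |h_jk|^2 over j in A is at most
  c = (1 - beta) alpha K.  For a fixed pair (k, A) the events S = A and this one are
  independent; the first has probability alpha^|A| (1 - alpha)^(K - |A|), and since every
  |h_jk|^2 is Exp(1) the second is the Erlang CDF F_|A|(c).  A union bound over k and over
  A in Pow ({1..K} - {k}), together with C(K - 1, m) <= C(K, m), bounds the outage probability
  by K times sum_{m < K} Bin(K, alpha)(m) F_m(c), which is exactly K P(E^uc).

  For the explicit bound the sum is split at m = (1 - eps) alpha K.  The small m form a binomial
  lower tail, controlled by the multiplicative Chernoff bound exp (- alpha K eps^2 / 2); for the
  large m the Chernoff bound F_m(c) <= exp (t c) / (1 + t)^m with 1 + t = a / c gives
  exp (alpha K gamma (beta, eps)).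
*)
theory Submission
  imports Defs
begin

section \<open>The squared modulus of a standard complex Gaussian\<close>

lemma norm_sq_le_eq_cball:
  fixes s :: real
  assumes "0 \<le> s"
  shows "{z::'a::real_normed_vector. (norm z)\<^sup>2 \<le> s} = cball 0 (sqrt s)"
proof safe
  fix x :: 'a assume "x \<in> cball 0 (sqrt s)"
  then have "norm x \<le> sqrt s" by simp
  then have "(norm x)\<^sup>2 \<le> (sqrt s)\<^sup>2" by (intro power_mono) auto
  with assms show "(norm x)\<^sup>2 \<le> s" by simp
qed (auto simp: real_le_rsqrt)

lemma emeasure_lborel_cmod_sq_le:
  "0 \<le> s \<Longrightarrow> emeasure lborel {z::complex. (cmod z)\<^sup>2 \<le> s} = ennreal (pi * s)"
  by (simp add: norm_sq_le_eq_cball emeasure_cball unit_ball_vol_2)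

lemma nn_integral_exp_minus_Icc:
  fixes r a :: real
  assumes "r \<le> a"
  shows "(\<integral>\<^sup>+s. ennreal (exp (- s)) * indicator {r..a} s \<partial>lborel) = ennreal (exp (- r) - exp (- a))"
proof -
  have "(\<integral>\<^sup>+s. ennreal (exp (- s)) * indicator {r..a} s \<partial>lborel) = ennreal (- exp (- a) - (- exp (- r)))"
    by (rule nn_integral_FTC_Icc) (use assms in \<open>auto intro!: derivative_eq_intros\<close>)
  then show ?thesis by simp
qed

lemma borel_measurable_exp_minus_indicator_Icc_norm_sq:
  "(\<lambda>(z::complex, s). ennreal (exp (- s)) * indicator {(cmod z)\<^sup>2..a} s) \<in> borel_measurable (lborel \<Otimes>\<^sub>M lborel)"
  unfolding indicator_def atLeastAtMost_iff by measurable

(* Fubini: the slice at height s is a disc of area pi s. *)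
lemma nn_integral_exp_minus_Icc_norm_sq:
  fixes a :: real
  assumes a: "0 \<le> a"
  shows "(\<integral>\<^sup>+(z::complex). (\<integral>\<^sup>+s. ennreal (exp (- s)) * indicator {(cmod z)\<^sup>2..a} s \<partial>lborel) \<partial>lborel)
    = ennreal (pi * (1 - (1 + a) * exp (- a)))"
proof -
  define f where "f z s = ennreal (exp (- s)) * indicator {(cmod z)\<^sup>2..a} s" for z :: complex and s :: real
  have f_meas: "case_prod f \<in> borel_measurable (lborel \<Otimes>\<^sub>M lborel)"
    unfolding f_def by (rule borel_measurable_exp_minus_indicator_Icc_norm_sq)
  have slices: "(\<integral>\<^sup>+z. f z s \<partial>lborel) = ennreal (pi * s * exp (- s)) * indicator {0..a} s" for s
  proof (cases "0 \<le> s \<and> s \<le> a")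
    case True
    then have "(\<integral>\<^sup>+z. f z s \<partial>lborel)
        = (\<integral>\<^sup>+z. ennreal (exp (- s)) * indicator {z::complex. (cmod z)\<^sup>2 \<le> s} z \<partial>lborel)"
      by (intro nn_integral_cong) (auto simp: f_def split: split_indicator)
    also have "\<dots> = ennreal (exp (- s)) * ennreal (pi * s)"
      using True by (subst nn_integral_cmult_indicator) (auto simp: emeasure_lborel_cmod_sq_le)
    finally show ?thesis
      using True by (simp add: ennreal_mult'' mult_ac)
  next
    case False
    then have "f z s = 0" for z
      by (auto simp: f_def split: split_indicator dest: order_trans[OF zero_le_power2[of "cmod z"]])
    then show ?thesis
      using False by simp
  qed
  have "(\<integral>\<^sup>+z. (\<integral>\<^sup>+s. f z s \<partial>lborel) \<partial>lborel)
      = (\<integral>\<^sup>+s. (\<integral>\<^sup>+z. f z s \<partial>lborel) \<partial>lborel)"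
    by (rule pair_sigma_finite.Fubini'[symmetric, OF _ f_meas])
      (simp add: pair_sigma_finite.intro lborel.sigma_finite_measure_axioms)
  also have "\<dots> = ennreal (- pi * (1 + a) * exp (- a) - (- pi * (1 + 0) * exp (- 0)))"
    unfolding slices
    by (rule nn_integral_FTC_Icc) (use a in \<open>auto intro!: derivative_eq_intros simp: algebra_simps\<close>)
  finally show ?thesis
    by (simp add: f_def algebra_simps)
qed

(* Layer cake: exp (- |z|^2) is the integral of exp (- s) over [|z|^2, a] plus exp (- a). *)
lemma nn_integral_gaussian_disc:
  fixes a :: real
  assumes a: "0 \<le> a"
  shows "(\<integral>\<^sup>+z. ennreal (exp (- (cmod z)\<^sup>2)) * indicator {z::complex. (cmod z)\<^sup>2 \<le> a} z \<partial>lborel)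
    = ennreal (pi * (1 - exp (- a)))"
proof -
  define D where "D = {z::complex. (cmod z)\<^sup>2 \<le> a}"
  have layers: "ennreal (exp (- (cmod z)\<^sup>2)) * indicator D z
      = (\<integral>\<^sup>+s. ennreal (exp (- s)) * indicator {(cmod z)\<^sup>2..a} s \<partial>lborel) + ennreal (exp (- a)) * indicator D z"
    for z
  proof (cases "z \<in> D")
    case True
    then have "(\<integral>\<^sup>+s. ennreal (exp (- s)) * indicator {(cmod z)\<^sup>2..a} s \<partial>lborel)
        = ennreal (exp (- (cmod z)\<^sup>2) - exp (- a))"
      unfolding D_def by (intro nn_integral_exp_minus_Icc) simp
    moreover have "exp (- a) \<le> exp (- (cmod z)\<^sup>2)"
      using True by (simp add: D_def)
    ultimately show ?thesis
      using True by (simp flip: ennreal_plus)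
  next
    case False
    then have "(\<lambda>s. ennreal (exp (- s)) * indicator {(cmod z)\<^sup>2..a} s) = (\<lambda>s. 0)"
      by (auto simp: D_def fun_eq_iff split: split_indicator)
    then show ?thesis
      using False by simp
  qed
  have "1 + a \<le> exp a"
    by (rule exp_ge_add_one_self)
  then have tail_nonneg: "0 \<le> 1 - (1 + a) * exp (- a)"
    by (simp add: exp_minus field_simps)
  have "(\<integral>\<^sup>+z. ennreal (exp (- (cmod z)\<^sup>2)) * indicator D z \<partial>lborel)
      = (\<integral>\<^sup>+z. (\<integral>\<^sup>+s. ennreal (exp (- s)) * indicator {(cmod z)\<^sup>2..a} s \<partial>lborel) \<partial>lborel)
        + (\<integral>\<^sup>+z. ennreal (exp (- a)) * indicator D z \<partial>lborel)"
    unfolding layers by (rule nn_integral_add)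
      (use borel_measurable_exp_minus_indicator_Icc_norm_sq in \<open>auto intro!: lborel.borel_measurable_nn_integral simp: D_def\<close>)
  also have "\<dots> = ennreal (pi * (1 - (1 + a) * exp (- a))) + ennreal (exp (- a) * (pi * a))"
    using a by (simp add: nn_integral_exp_minus_Icc_norm_sq D_def nn_integral_cmult_indicator
        emeasure_lborel_cmod_sq_le ennreal_mult)
  also have "\<dots> = ennreal (pi * (1 - (1 + a) * exp (- a)) + exp (- a) * (pi * a))"
    using a tail_nonneg by (intro ennreal_plus[symmetric]) auto
  also have "pi * (1 - (1 + a) * exp (- a)) + exp (- a) * (pi * a) = pi * (1 - exp (- a))"
    by (simp add: algebra_simps)
  finally show ?thesis
    unfolding D_def .
qed

lemma (in prob_space) CN01_distributed_cmod_sq: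
  assumes "CN01_distributed M Z"
  shows "distributed M lborel (\<lambda>\<omega>. (cmod (Z \<omega>))\<^sup>2) (exponential_density 1)"
proof (rule exponential_distributed_iff[THEN iffD2], simp, intro conjI allI impI)
  have Z: "distributed M lborel Z (\<lambda>z. ennreal (exp (- (cmod z)\<^sup>2) / pi))"
    using assms by (simp add: CN01_distributed_def)
  have [measurable]: "Z \<in> borel_measurable M"
    using distributed_measurable[OF Z] by simp
  show "(\<lambda>\<omega>. (cmod (Z \<omega>))\<^sup>2) \<in> borel_measurable M"
    by measurable
  have density_factor: "ennreal (exp (- (cmod z)\<^sup>2) / pi) = ennreal (1 / pi) * ennreal (exp (- (cmod z)\<^sup>2))" for z
    by (subst ennreal_mult[symmetric]) auto
  fix a :: real
  assume a: "0 \<le> a"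
  have "emeasure M {\<omega> \<in> space M. (cmod (Z \<omega>))\<^sup>2 \<le> a} = emeasure M (Z -` {z. (cmod z)\<^sup>2 \<le> a} \<inter> space M)"
    by (rule arg_cong) auto
  also have "\<dots> = (\<integral>\<^sup>+z. ennreal (exp (- (cmod z)\<^sup>2) / pi) * indicator {z. (cmod z)\<^sup>2 \<le> a} z \<partial>lborel)"
    by (rule distributed_emeasure[OF Z]) measurable
  also have "\<dots>
      = ennreal (1 / pi) * (\<integral>\<^sup>+z. ennreal (exp (- (cmod z)\<^sup>2)) * indicator {z. (cmod z)\<^sup>2 \<le> a} z \<partial>lborel)"
    by (subst nn_integral_cmult[symmetric]) (simp_all add: density_factor mult.assoc)
  also have "\<dots> = ennreal (1 - exp (- a))"
    using a by (simp add: nn_integral_gaussian_disc ennreal_mult''[symmetric])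
  finally show "\<P>(\<omega> in M. (cmod (Z \<omega>))\<^sup>2 \<le> a) = 1 - exp (- a * 1)"
    using a by (simp add: emeasure_eq_measure)
qed

section \<open>Chernoff bounds\<close>

(* P(X_1 + ... + X_m <= c) for i.i.d. Exp(1) variables X_i and c >= 0; the empty sum is 0. *)
definition exp_sum_CDF :: "nat \<Rightarrow> real \<Rightarrow> real" where
  "exp_sum_CDF m c = (if m = 0 then 1 else erlang_CDF (m - 1) 1 c)"

lemma exp_sum_CDF_nonneg: "0 \<le> exp_sum_CDF m c"
  by (simp add: exp_sum_CDF_def)

lemma exp_sum_CDF_le_1: "exp_sum_CDF m c \<le> 1"
  by (auto simp: exp_sum_CDF_def erlang_CDF_def intro!: sum_nonneg)

lemma erlang_density_indicator_le:
  fixes t c x :: real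
  assumes t: "0 < t"
  shows "erlang_density k 1 x * indicator {..c} x
    \<le> exp (t * c) / (1 + t) ^ Suc k * erlang_density k (1 + t) x"
proof (cases "x < 0")
  case True
  then show ?thesis
    by (simp add: erlang_density_def)
next
  case False
  have "indicator {..c} x \<le> exp (t * (c - x))"
    using t by (auto split: split_indicator)
  then have "erlang_density k 1 x * indicator {..c} x \<le> erlang_density k 1 x * exp (t * (c - x))"
    by (intro mult_left_mono) auto
  also have "\<dots> = x ^ k / fact k * (exp (- x) * exp (t * (c - x)))"
    using False by (simp add: erlang_density_def)
  also have "exp (- x) * exp (t * (c - x)) = exp (t * c) * exp (- (1 + t) * x)"
    by (simp add: algebra_simps flip: exp_add)
  also have "x ^ k / fact k * (exp (t * c) * exp (- (1 + t) * x))
      = exp (t * c) / (1 + t) ^ Suc k * erlang_density k (1 + t) x"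
    using False t by (simp add: erlang_density_def)
  finally show ?thesis .
qed

lemma erlang_CDF_le_exp:
  fixes t c :: real
  assumes t: "0 < t"
  shows "erlang_CDF k 1 c \<le> exp (t * c) / (1 + t) ^ Suc k"
proof -
  define B where "B = exp (t * c) / (1 + t) ^ Suc k"
  have "ennreal (erlang_density k 1 x) * indicator {..c} x \<le> ennreal B * ennreal (erlang_density k (1 + t) x)" for x
  proof -
    have "ennreal (erlang_density k 1 x) * indicator {..c} x = ennreal (erlang_density k 1 x * indicator {..c} x)"
      by (simp add: indicator_def)
    also have "\<dots> \<le> ennreal (B * erlang_density k (1 + t) x)"
      unfolding B_def by (rule ennreal_leI erlang_density_indicator_le t)+
    also have "\<dots> = ennreal B * ennreal (erlang_density k (1 + t) x)"
      by (rule ennreal_mult) (use t in \<open>simp_all add: B_def\<close>)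
    finally show ?thesis .
  qed
  then have "ennreal (erlang_CDF k 1 c) \<le> (\<integral>\<^sup>+x. ennreal B * ennreal (erlang_density k (1 + t) x) \<partial>lborel)"
    by (auto simp flip: nn_integral_erlang_density intro!: nn_integral_mono)
  also have "\<dots> = ennreal B"
    using nn_integral_erlang_ith_moment[of "1 + t" k 0] t by (simp add: nn_integral_cmult)
  finally show ?thesis
    using t by (simp add: B_def)
qed

lemma exp_sum_CDF_le_exp:
  fixes a c :: real
  assumes c: "0 < c" "c < a" and m: "a \<le> real m"
  shows "exp_sum_CDF m c \<le> exp (a - c + a * ln (c / a))"
proof -
  have "0 < a" "m \<noteq> 0"
    using c m by auto
  define t where "t = a / c - 1"
  have t: "0 < t" "1 + t = a / c" "t * c = a - c"
    using c by (auto simp: t_def field_simps)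
  have "exp_sum_CDF m c = erlang_CDF (m - 1) 1 c"
    using \<open>m \<noteq> 0\<close> by (simp add: exp_sum_CDF_def)
  also have "\<dots> \<le> exp (t * c) / (1 + t) ^ Suc (m - 1)"
    by (rule erlang_CDF_le_exp[OF t(1)])
  also have "\<dots> = exp (a - c) / (a / c) powr real m"
    using \<open>m \<noteq> 0\<close> \<open>0 < a\<close> c by (simp add: t powr_realpow)
  also have "\<dots> \<le> exp (a - c) / (a / c) powr a"
    using m \<open>0 < a\<close> c by (intro divide_left_mono powr_mono) (auto simp: field_simps)
  also have "\<dots> = exp (a - c + a * ln (c / a))"
  proof -
    have "ln (c / a) = - ln (a / c)"
      using \<open>0 < a\<close> c by (simp add: ln_div)
    then show ?thesis
      using \<open>0 < a\<close> c by (simp add: powr_def exp_diff)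
  qed
  finally show ?thesis .
qed

lemma x_ln_x_ge_half_sq_minus_one:
  fixes u :: real
  assumes u: "0 < u" "u \<le> 1"
  shows "(u\<^sup>2 - 1) / 2 \<le> u * ln u"
proof -
  let ?g = "\<lambda>x::real. x * ln x - (x\<^sup>2 - 1) / 2"
  have "?g 1 \<le> ?g u"
  proof (rule DERIV_nonpos_imp_nonincreasing[OF u(2)])
    fix x :: real
    assume x: "u \<le> x" "x \<le> 1"
    then have "0 < x"
      using u by linarith
    then have "DERIV ?g x :> ln x + 1 - x" and "ln x + 1 - x \<le> 0"
      using ln_le_minus_one[of x] by (auto intro!: derivative_eq_intros simp: field_simps)
    then show "\<exists>y. DERIV ?g x :> y \<and> y \<le> 0"
      by blast
  qed
  then show ?thesis
    by simp
qed

lemma sum_binomial_pmf_power: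
  assumes "0 \<le> p" "p \<le> 1"
  shows "(\<Sum>m\<le>n. pmf (binomial_pmf n p) m * s ^ m) = (p * s + (1 - p)) ^ n"
  using assms by (simp add: binomial_ring power_mult_distrib mult_ac)

lemma binomial_chernoff_exponent_le:
  fixes n :: nat and p \<epsilon> :: real
  assumes p: "0 \<le> p" "p \<le> 1" and \<epsilon>: "0 < \<epsilon>" "\<epsilon> < 1"
  shows "n * ln (1 - p * \<epsilon>) - (1 - \<epsilon>) * p * n * ln (1 - \<epsilon>) \<le> - p * n * \<epsilon>\<^sup>2 / 2"
proof -
  have "p * \<epsilon> < 1"
    using p \<epsilon> mult_left_le_one_le[of \<epsilon> p] by linarith
  then have "n * ln (1 - p * \<epsilon>) \<le> n * (- p * \<epsilon>)"
    using ln_le_minus_one[of "1 - p * \<epsilon>"] by (intro mult_left_mono) auto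
  moreover have "n * (- p * \<epsilon>) = - (p * n * \<epsilon>)"
    by simp
  moreover have "(1 - \<epsilon>) * p * n * ln (1 - \<epsilon>) = p * n * ((1 - \<epsilon>) * ln (1 - \<epsilon>))"
    by simp
  moreover have "p * n * (((1 - \<epsilon>)\<^sup>2 - 1) / 2) \<le> p * n * ((1 - \<epsilon>) * ln (1 - \<epsilon>))"
    using x_ln_x_ge_half_sq_minus_one[of "1 - \<epsilon>"] p \<epsilon> by (intro mult_left_mono) auto
  moreover have "p * n * (((1 - \<epsilon>)\<^sup>2 - 1) / 2) = - (p * n * \<epsilon>) + p * n * \<epsilon>\<^sup>2 / 2"
    by (simp add: power2_eq_square field_simps)
  ultimately show ?thesis
    by linarith
qed

lemma binomial_pmf_lower_tail_le:
  fixes n :: nat and p \<epsilon> :: real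
  assumes p: "0 \<le> p" "p \<le> 1" and \<epsilon>: "0 < \<epsilon>" "\<epsilon> < 1"
  shows "measure_pmf.prob (binomial_pmf n p) {m. real m \<le> (1 - \<epsilon>) * p * n}
    \<le> exp (- p * n * \<epsilon>\<^sup>2 / 2)"
proof -
  define s where "s = 1 - \<epsilon>"
  define a where "a = (1 - \<epsilon>) * p * n"
  define T where "T = {m. m \<le> n \<and> real m \<le> a}"
  have s: "0 < s" "s < 1"
    using \<epsilon> by (auto simp: s_def)
  have "p * \<epsilon> < 1"
    using p \<epsilon> mult_left_le_one_le[of \<epsilon> p] by linarith
  have "measure_pmf.prob (binomial_pmf n p) {m. real m \<le> a} = (\<Sum>m\<in>T. pmf (binomial_pmf n p) m)"
    by (subst measure_prob_cong_0[where B = T]) (auto simp: T_def p measure_measure_pmf_finite)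
  also have "\<dots> \<le> (\<Sum>m\<in>T. pmf (binomial_pmf n p) m * s powr (real m - a))"
  proof (rule sum_mono)
    fix m
    assume "m \<in> T"
    then have "1 \<le> s powr (real m - a)"
      using s powr_mono2'[of "real m - a" s 1] by (simp add: T_def)
    then show "pmf (binomial_pmf n p) m \<le> pmf (binomial_pmf n p) m * s powr (real m - a)"
      by (simp add: mult_le_cancel_left1)
  qed
  also have "\<dots> \<le> (\<Sum>m\<le>n. pmf (binomial_pmf n p) m * s powr (real m - a))"
    by (rule sum_mono2) (auto simp: T_def)
  also have "\<dots> = (\<Sum>m\<le>n. pmf (binomial_pmf n p) m * s ^ m) * s powr (- a)"
    unfolding sum_distrib_right using s
    by (intro sum.cong refl) (simp add: powr_diff powr_realpow powr_minus divide_inverse)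
  also have "(\<Sum>m\<le>n. pmf (binomial_pmf n p) m * s ^ m) = (1 - p * \<epsilon>) ^ n"
    using sum_binomial_pmf_power[OF p, of n s] by (simp add: s_def algebra_simps)
  also have "(1 - p * \<epsilon>) ^ n * s powr (- a) = exp (n * ln (1 - p * \<epsilon>) - a * ln s)"
    using s \<open>p * \<epsilon> < 1\<close> by (simp add: powr_def exp_diff exp_of_nat_mult exp_minus divide_inverse)
  also have "\<dots> \<le> exp (- p * n * \<epsilon>\<^sup>2 / 2)"
    using binomial_chernoff_exponent_le[OF p \<epsilon>] by (simp add: a_def s_def)
  finally show ?thesis
    by (simp add: a_def)
qed

lemma sum_binomial_pmf_exp_sum_CDF_le:
  fixes n :: nat and p \<beta> \<epsilon> :: real
  assumes n: "0 < n" and p: "0 < p" "p \<le> 1" and \<epsilon>: "0 < \<epsilon>" "\<epsilon> < \<beta>" "\<beta> < 1"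
  shows "(\<Sum>m<n. pmf (binomial_pmf n p) m * exp_sum_CDF m ((1 - \<beta>) * p * n))
    \<le> exp (- p * n * \<epsilon>\<^sup>2 / 2) + exp (p * n * gamma_fn \<beta> \<epsilon>)"
proof -
  define c where "c = (1 - \<beta>) * p * n"
  define a where "a = (1 - \<epsilon>) * p * n"
  define Q where "Q = exp (p * n * gamma_fn \<beta> \<epsilon>)"
  have c: "0 < c" "c < a"
    using n p \<epsilon> by (auto simp: c_def a_def intro!: mult_strict_right_mono)
  have exponent_eq: "a - c + a * ln (c / a) = p * n * gamma_fn \<beta> \<epsilon>"
  proof -
    have "c / a = (1 - \<beta>) / (1 - \<epsilon>)"
      using n p by (simp add: c_def a_def)
    then show ?thesis
      by (simp add: gamma_fn_def a_def c_def algebra_simps)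
  qed
  have termwise: "pmf (binomial_pmf n p) m * exp_sum_CDF m c
      \<le> (if real m \<le> a then pmf (binomial_pmf n p) m else 0) + pmf (binomial_pmf n p) m * Q" for m
  proof (cases "real m \<le> a")
    case True
    have "pmf (binomial_pmf n p) m * exp_sum_CDF m c \<le> pmf (binomial_pmf n p) m"
      by (intro mult_left_le exp_sum_CDF_le_1 pmf_nonneg)
    moreover have "0 \<le> pmf (binomial_pmf n p) m * Q"
      by (simp add: Q_def)
    ultimately show ?thesis
      using True by simp
  next
    case False
    then have "exp_sum_CDF m c \<le> Q"
      using exp_sum_CDF_le_exp[OF c, of m] exponent_eq by (simp add: Q_def)
    then show ?thesis
      using False by (simp add: mult_left_mono)
  qed
  have "(\<Sum>m<n. pmf (binomial_pmf n p) m * exp_sum_CDF m c)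
      \<le> (\<Sum>m<n. (if real m \<le> a then pmf (binomial_pmf n p) m else 0) + pmf (binomial_pmf n p) m * Q)"
    by (intro sum_mono termwise)
  also have "\<dots> = measure_pmf.prob (binomial_pmf n p) ({..<n} \<inter> {m. real m \<le> a})
      + measure_pmf.prob (binomial_pmf n p) {..<n} * Q"
    by (simp add: sum.distrib sum_distrib_right sum.inter_restrict measure_measure_pmf_finite)
  also have "\<dots> \<le> measure_pmf.prob (binomial_pmf n p) {m. real m \<le> a} + 1 * Q"
    by (intro add_mono mult_right_mono measure_pmf.finite_measure_mono) (auto simp: Q_def)
  also have "\<dots> \<le> exp (- p * n * \<epsilon>\<^sup>2 / 2) + Q"
    using binomial_pmf_lower_tail_le[of p \<epsilon> n] p \<epsilon> unfolding a_def by simp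
  finally show ?thesis
    by (simp add: c_def Q_def)
qed

section \<open>Random subsets and sums of exponential variables\<close>

lemma (in prob_space) prob_random_subset_eq:
  fixes S :: "'a \<Rightarrow> 'i set" and I :: "'i set"
  assumes I: "finite I" "I \<noteq> {}" and A: "A \<subseteq> I"
    and S_sub: "\<And>\<omega>. \<omega> \<in> space M \<Longrightarrow> S \<omega> \<subseteq> I"
    and S_meas: "S \<in> measurable M (count_space UNIV)"
    and S_indep: "indep_vars (\<lambda>_. count_space UNIV) (\<lambda>i \<omega>. i \<in> S \<omega>) I"
    and S_prob: "\<And>i. i \<in> I \<Longrightarrow> \<P>(\<omega> in M. i \<in> S \<omega>) = p"
  shows "\<P>(\<omega> in M. S \<omega> = A) = p ^ card A * (1 - p) ^ (card I - card A)"
proof -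
  have member_event: "{\<omega> \<in> space M. i \<in> S \<omega>} \<in> events" for i
  proof -
    have "S -` {B. i \<in> B} \<inter> space M \<in> events"
      using S_meas by (rule measurable_sets) simp
    moreover have "S -` {B. i \<in> B} \<inter> space M = {\<omega> \<in> space M. i \<in> S \<omega>}"
      by auto
    ultimately show ?thesis
      by simp
  qed
  have "{\<omega> \<in> space M. S \<omega> = A} = (\<Inter>i\<in>I. (\<lambda>\<omega>. i \<in> S \<omega>) -` {i \<in> A} \<inter> space M)"
    using S_sub A I(2) by auto
  then have "\<P>(\<omega> in M. S \<omega> = A) = (\<Prod>i\<in>I. prob ((\<lambda>\<omega>. i \<in> S \<omega>) -` {i \<in> A} \<inter> space M))"
    using indep_varsD_finite[OF S_indep I(2,1), of "\<lambda>i. {i \<in> A}"] by simp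
  also have "\<dots> = (\<Prod>i\<in>I. if i \<in> A then p else 1 - p)"
  proof (rule prod.cong)
    fix i
    assume "i \<in> I"
    show "prob ((\<lambda>\<omega>. i \<in> S \<omega>) -` {i \<in> A} \<inter> space M) = (if i \<in> A then p else 1 - p)"
    proof (cases "i \<in> A")
      case True
      then show ?thesis
        using S_prob[OF \<open>i \<in> I\<close>] by (simp add: vimage_def Int_def conj_commute)
    next
      case False
      then have "(\<lambda>\<omega>. i \<in> S \<omega>) -` {i \<in> A} \<inter> space M = space M - {\<omega> \<in> space M. i \<in> S \<omega>}"
        by auto
      then show ?thesis
        using False S_prob[OF \<open>i \<in> I\<close>] prob_compl[OF member_event] by simp
    qed
  qed simp
  also have "\<dots> = p ^ card A * (1 - p) ^ (card I - card A)"
    using A I(1) by (simp add: prod.If_cases Int_absorb1 card_Diff_subset finite_subset Diff_eq[symmetric])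
  finally show ?thesis .
qed

lemma (in prob_space) prob_sum_exponential_le:
  fixes X :: "'i \<Rightarrow> 'a \<Rightarrow> real"
  assumes J: "finite J" and c: "0 \<le> c"
    and X_indep: "indep_vars (\<lambda>_. borel) X J"
    and X_exp: "\<And>j. j \<in> J \<Longrightarrow> distributed M lborel (X j) (exponential_density 1)"
  shows "\<P>(\<omega> in M. (\<Sum>j\<in>J. X j \<omega>) \<le> c) = exp_sum_CDF (card J) c"
proof (cases "J = {}")
  case True
  then show ?thesis
    using c by (simp add: exp_sum_CDF_def prob_space)
next
  case False
  have "distributed M lborel (\<lambda>\<omega>. \<Sum>j\<in>J. X j \<omega>) (erlang_density (card J - 1) 1)"
    using J False X_exp X_indep by (intro exponential_distributed_sum) auto
  then show ?thesis
    using False J c by (simp add: erlang_distributed_le exp_sum_CDF_def)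
qed

lemma (in prob_space) indep_set_vimage_algebraD:
  assumes indep: "indep_set (sets (vimage_algebra (space M) X MX)) (sets (vimage_algebra (space M) Y MY))"
    and A: "A \<in> sets MX" and B: "B \<in> sets MY"
  shows "\<P>(\<omega> in M. X \<omega> \<in> A \<and> Y \<omega> \<in> B) = \<P>(\<omega> in M. X \<omega> \<in> A) * \<P>(\<omega> in M. Y \<omega> \<in> B)"
proof -
  have "prob ((X -` A \<inter> space M) \<inter> (Y -` B \<inter> space M)) = prob (X -` A \<inter> space M) * prob (Y -` B \<inter> space M)"
    using indep by (rule indep_setD) (intro in_vimage_algebra A B)+
  moreover have "{\<omega> \<in> space M. X \<omega> \<in> A \<and> Y \<omega> \<in> B} = (X -` A \<inter> space M) \<inter> (Y -` B \<inter> space M)"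
    by auto
  ultimately show ?thesis
    by (simp add: vimage_def Int_def conj_commute)
qed

lemma sum_Pow_card:
  assumes "finite D"
  shows "(\<Sum>A\<in>Pow D. f (card A)) = (\<Sum>m\<le>card D. of_nat (card D choose m) * f m)"
proof -
  have "(\<Sum>A\<in>Pow D. f (card A)) = (\<Sum>m\<le>card D. \<Sum>A\<in>{A \<in> Pow D. card A = m}. f (card A))"
    using assms by (intro sum.group[symmetric]) (auto intro: card_mono)
  also have "\<dots> = (\<Sum>m\<le>card D. of_nat (card D choose m) * f m)"
    using n_subsets[OF assms] by (intro sum.cong refl) (simp add: Pow_def)
  finally show ?thesis .
qed

lemma sum_Pow_le_binomial_pmf:
  fixes F :: "nat \<Rightarrow> real"
  assumes D: "finite D" "card D < K" and p: "0 \<le> p" "p \<le> 1" and F: "\<And>m. 0 \<le> F m"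
  shows "(\<Sum>A\<in>Pow D. p ^ card A * (1 - p) ^ (K - card A) * F (card A))
    \<le> (\<Sum>m<K. pmf (binomial_pmf K p) m * F m)"
proof -
  have "(\<Sum>A\<in>Pow D. p ^ card A * (1 - p) ^ (K - card A) * F (card A))
      = (\<Sum>m\<le>card D. real (card D choose m) * (p ^ m * (1 - p) ^ (K - m) * F m))"
    using sum_Pow_card[OF D(1)] .
  also have "\<dots> \<le> (\<Sum>m\<le>card D. real (K choose m) * (p ^ m * (1 - p) ^ (K - m) * F m))"
    using D(2) p F by (intro sum_mono mult_right_mono) (auto intro: binomial_right_mono)
  also have "\<dots> \<le> (\<Sum>m<K. real (K choose m) * (p ^ m * (1 - p) ^ (K - m) * F m))"
    using D(2) p F by (intro sum_mono2) auto
  also have "\<dots> = (\<Sum>m<K. pmf (binomial_pmf K p) m * F m)"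
    using p by (simp add: mult_ac)
  finally show ?thesis .
qed

section \<open>The multicasting and unicasting models\<close>

definition links :: "nat \<Rightarrow> (nat \<times> nat) set" where
  "links K = {(j, k). j \<in> {1..K} \<and> k \<in> {1..K} \<and> j \<noteq> k}"

locale multicast_model = prob_space M for M :: "'a measure" +
  fixes K :: nat and \<alpha> :: real and S :: "'a \<Rightarrow> nat set" and h :: "'a \<Rightarrow> nat \<Rightarrow> nat \<Rightarrow> complex"
  assumes K: "1 \<le> K" and \<alpha>: "0 \<le> \<alpha>" "\<alpha> \<le> 1"
    and S_sub: "\<And>\<omega>. \<omega> \<in> space M \<Longrightarrow> S \<omega> \<subseteq> {1..K}"
    and S_meas: "S \<in> measurable M (count_space UNIV)"
    and S_indep: "indep_vars (\<lambda>_. count_space UNIV) (\<lambda>k \<omega>. k \<in> S \<omega>) {1..K}"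
    and S_prob: "\<And>k. k \<in> {1..K} \<Longrightarrow> \<P>(\<omega> in M. k \<in> S \<omega>) = \<alpha>"
    and h_indep: "indep_vars (\<lambda>_. borel) (\<lambda>(j, k) \<omega>. h \<omega> j k) (links K)"
    and h_CN: "\<And>j k. (j, k) \<in> links K \<Longrightarrow> CN01_distributed M (\<lambda>\<omega>. h \<omega> j k)"
    and S_h_indep: "indep_set (sets (vimage_algebra (space M) S (count_space UNIV)))
      (sets (vimage_algebra (space M) (\<lambda>\<omega>. \<lambda>p \<in> links K. case p of (j, k) \<Rightarrow> h \<omega> j k)
        (PiM (links K) (\<lambda>_. borel))))"
begin

lemma prob_S_eq:
  "A \<subseteq> {1..K} \<Longrightarrow> \<P>(\<omega> in M. S \<omega> = A) = \<alpha> ^ card A * (1 - \<alpha>) ^ (K - card A)"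
  using prob_random_subset_eq[OF _ _ _ S_sub S_meas S_indep S_prob] K by simp

lemma gain_measurable:
  assumes "k \<in> {1..K}" "A \<subseteq> {1..K} - {k}"
  shows "(\<lambda>\<omega>. \<Sum>j\<in>A. (cmod (h \<omega> j k))\<^sup>2) \<in> borel_measurable M"
proof (rule borel_measurable_sum)
  fix j
  assume "j \<in> A"
  then have "(j, k) \<in> links K"
    using assms by (auto simp: links_def)
  then have "distributed M lborel (\<lambda>\<omega>. h \<omega> j k) (\<lambda>z. ennreal (exp (- (cmod z)\<^sup>2) / pi))"
    using h_CN by (simp add: CN01_distributed_def)
  from distributed_measurable[OF this] have "(\<lambda>\<omega>. h \<omega> j k) \<in> borel_measurable M"
    by simp
  then show "(\<lambda>\<omega>. (cmod (h \<omega> j k))\<^sup>2) \<in> borel_measurable M"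
    by measurable
qed

lemma prob_gain_le:
  assumes k: "k \<in> {1..K}" and A: "A \<subseteq> {1..K} - {k}" and c: "0 \<le> c"
  shows "\<P>(\<omega> in M. (\<Sum>j\<in>A. (cmod (h \<omega> j k))\<^sup>2) \<le> c) = exp_sum_CDF (card A) c"
proof -
  let ?J = "(\<lambda>j. (j, k)) ` A"
  have inj: "inj_on (\<lambda>j. (j, k)) A"
    by (auto simp: inj_on_def)
  have J: "finite ?J" "?J \<subseteq> links K"
    using k A finite_subset[OF A] by (auto simp: links_def)
  have "indep_vars (\<lambda>_. borel) (\<lambda>p \<omega>. (cmod (h \<omega> (fst p) (snd p)))\<^sup>2) ?J"
    using indep_vars_compose2[OF indep_vars_subset[OF h_indep J(2)], of "\<lambda>_ z. (cmod z)\<^sup>2" "\<lambda>_. borel"]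
    by (simp add: split_beta)
  moreover have "distributed M lborel (\<lambda>\<omega>. (cmod (h \<omega> (fst p) (snd p)))\<^sup>2) (exponential_density 1)"
    if "p \<in> ?J" for p
    using that J(2) by (auto intro!: CN01_distributed_cmod_sq h_CN)
  ultimately have "\<P>(\<omega> in M. (\<Sum>p\<in>?J. (cmod (h \<omega> (fst p) (snd p)))\<^sup>2) \<le> c) = exp_sum_CDF (card ?J) c"
    using J(1) c by (intro prob_sum_exponential_le) auto
  then show ?thesis
    by (simp add: sum.reindex[OF inj] card_image[OF inj])
qed

lemma prob_S_eq_gain_le:
  assumes k: "k \<in> {1..K}" and A: "A \<subseteq> {1..K} - {k}" and c: "0 \<le> c"
  shows "\<P>(\<omega> in M. S \<omega> = A \<and> (\<Sum>j\<in>A. (cmod (h \<omega> j k))\<^sup>2) \<le> c)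
    = \<alpha> ^ card A * (1 - \<alpha>) ^ (K - card A) * exp_sum_CDF (card A) c"
proof -
  define H where "H = (\<lambda>\<omega>. \<lambda>p \<in> links K. case p of (j, k) \<Rightarrow> h \<omega> j k)"
  define B where "B = {x \<in> space (PiM (links K) (\<lambda>_. borel)). (\<Sum>j\<in>A. (cmod (x (j, k)))\<^sup>2) \<le> c}"
  have link: "(j, k) \<in> links K" if "j \<in> A" for j
    using that k A by (auto simp: links_def)
  have "(\<lambda>x. \<Sum>j\<in>A. (cmod (x (j, k)))\<^sup>2) \<in> borel_measurable (PiM (links K) (\<lambda>_. borel))"
    by (intro borel_measurable_sum borel_measurable_power borel_measurable_norm
        measurable_compose[OF measurable_component_singleton[OF link]]) auto
  then have "B \<in> sets (PiM (links K) (\<lambda>_. borel))"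
    unfolding B_def by measurable
  moreover have "H \<omega> \<in> B \<longleftrightarrow> (\<Sum>j\<in>A. (cmod (h \<omega> j k))\<^sup>2) \<le> c" for \<omega>
    using link by (simp add: B_def H_def space_PiM)
  ultimately have "\<P>(\<omega> in M. S \<omega> = A \<and> (\<Sum>j\<in>A. (cmod (h \<omega> j k))\<^sup>2) \<le> c)
      = \<P>(\<omega> in M. S \<omega> = A) * \<P>(\<omega> in M. (\<Sum>j\<in>A. (cmod (h \<omega> j k))\<^sup>2) \<le> c)"
    using indep_set_vimage_algebraD[OF S_h_indep[folded H_def], of "{A}" B] by simp
  moreover have "A \<subseteq> {1..K}"
    using A by blast
  ultimately show ?thesis
    using k A c by (simp add: prob_S_eq prob_gain_le)
qed

lemma multicast_outage_le:
  assumes c: "0 \<le> c"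
  shows "\<P>(\<omega> in M. \<exists>k \<in> {1..K} - S \<omega>. (\<Sum>j\<in>S \<omega>. (cmod (h \<omega> j k))\<^sup>2) \<le> c)
    \<le> K * (\<Sum>m<K. pmf (binomial_pmf K \<alpha>) m * exp_sum_CDF m c)"
proof -
  define E where "E k A = {\<omega> \<in> space M. S \<omega> = A \<and> (\<Sum>j\<in>A. (cmod (h \<omega> j k))\<^sup>2) \<le> c}" for k A
  define P where "P = (\<Sum>m<K. pmf (binomial_pmf K \<alpha>) m * exp_sum_CDF m c)"
  have E_event: "E k A \<in> events" if "k \<in> {1..K}" "A \<in> Pow ({1..K} - {k})" for k A
  proof -
    have "(\<lambda>\<omega>. \<Sum>j\<in>A. (cmod (h \<omega> j k))\<^sup>2) \<in> borel_measurable M"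
      using that by (intro gain_measurable) auto
    then show ?thesis
      using S_meas unfolding E_def by measurable
  qed
  have "{\<omega> \<in> space M. \<exists>k \<in> {1..K} - S \<omega>. (\<Sum>j\<in>S \<omega>. (cmod (h \<omega> j k))\<^sup>2) \<le> c}
      \<subseteq> (\<Union>k\<in>{1..K}. \<Union>A\<in>Pow ({1..K} - {k}). E k A)"
    using S_sub by (fastforce simp: E_def)
  then have "\<P>(\<omega> in M. \<exists>k \<in> {1..K} - S \<omega>. (\<Sum>j\<in>S \<omega>. (cmod (h \<omega> j k))\<^sup>2) \<le> c)
      \<le> measure M (\<Union>k\<in>{1..K}. \<Union>A\<in>Pow ({1..K} - {k}). E k A)"
    using E_event by (intro finite_measure_mono sets.finite_UN) auto
  also have "\<dots> \<le> (\<Sum>k\<in>{1..K}. measure M (\<Union>A\<in>Pow ({1..K} - {k}). E k A))"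
    using E_event by (intro measure_UNION_le) auto
  also have "\<dots> \<le> (\<Sum>k\<in>{1..K}. \<Sum>A\<in>Pow ({1..K} - {k}). measure M (E k A))"
    using E_event by (intro sum_mono measure_UNION_le) auto
  also have "\<dots> \<le> (\<Sum>k\<in>{1..K}. P)"
  proof (rule sum_mono)
    fix k
    assume k: "k \<in> {1..K}"
    have "(\<Sum>A\<in>Pow ({1..K} - {k}). measure M (E k A))
        = (\<Sum>A\<in>Pow ({1..K} - {k}). \<alpha> ^ card A * (1 - \<alpha>) ^ (K - card A) * exp_sum_CDF (card A) c)"
      using k c by (intro sum.cong refl) (simp add: E_def prob_S_eq_gain_le)
    also have "\<dots> \<le> P"
      unfolding P_def using k K \<alpha> by (intro sum_Pow_le_binomial_pmf exp_sum_CDF_nonneg) auto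
    finally show "(\<Sum>A\<in>Pow ({1..K} - {k}). measure M (E k A)) \<le> P" .
  qed
  finally show ?thesis
    by (simp add: P_def)
qed

end

locale unicast_model = prob_space N for N :: "'b measure" +
  fixes K :: nat and \<alpha> :: real and K1 :: "'b \<Rightarrow> nat" and g :: "'b \<Rightarrow> nat \<Rightarrow> real"
  assumes K1_meas: "K1 \<in> measurable N (count_space UNIV)"
    and K1_distr: "distr N (count_space UNIV) K1 = measure_pmf (binomial_pmf K \<alpha>)"
    and g_indep: "indep_vars (\<lambda>_. borel) (\<lambda>i \<omega>. g \<omega> i) UNIV"
    and g_exp: "\<And>i. distributed N lborel (\<lambda>\<omega>. g \<omega> i) (exponential_density 1)"
    and K1_g_indep: "indep_set (sets (vimage_algebra (space N) K1 (count_space UNIV)))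
      (sets (vimage_algebra (space N) g (PiM UNIV (\<lambda>_. borel))))"
begin

lemma prob_K1_eq: "\<P>(\<omega> in N. K1 \<omega> = m) = pmf (binomial_pmf K \<alpha>) m"
proof -
  have "\<P>(\<omega> in N. K1 \<omega> = m) = prob (K1 -` {m} \<inter> space N)"
    by (rule arg_cong) auto
  also have "\<dots> = measure (distr N (count_space UNIV) K1) {m}"
    by (rule measure_distr[symmetric, OF K1_meas]) simp
  finally show ?thesis
    by (simp add: K1_distr measure_pmf_single)
qed

lemma prob_K1_eq_sum_le:
  assumes c: "0 \<le> c"
  shows "\<P>(\<omega> in N. K1 \<omega> = m \<and> (\<Sum>j=1..m. g \<omega> j) \<le> c) = pmf (binomial_pmf K \<alpha>) m * exp_sum_CDF m c"
proof -
  define B where "B = {x \<in> space (PiM UNIV (\<lambda>_::nat. borel)). (\<Sum>j=1..m. x j) \<le> (c::real)}"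
  have "B \<in> sets (PiM UNIV (\<lambda>_. borel))"
    unfolding B_def by measurable
  then have "\<P>(\<omega> in N. K1 \<omega> = m \<and> (\<Sum>j=1..m. g \<omega> j) \<le> c)
      = \<P>(\<omega> in N. K1 \<omega> = m) * \<P>(\<omega> in N. (\<Sum>j=1..m. g \<omega> j) \<le> c)"
    using indep_set_vimage_algebraD[OF K1_g_indep, of "{m}" B] by (simp add: B_def space_PiM)
  also have "\<P>(\<omega> in N. (\<Sum>j=1..m. g \<omega> j) \<le> c) = exp_sum_CDF m c"
    using c g_exp indep_vars_subset[OF g_indep] by (subst prob_sum_exponential_le) auto
  finally show ?thesis
    by (simp add: prob_K1_eq)
qed

lemma unicast_outage_eq:
  assumes c: "0 \<le> c"
  shows "\<P>(\<omega> in N. K1 \<omega> < K \<and> (\<Sum>j=1..K1 \<omega>. g \<omega> j) \<le> c)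
    = (\<Sum>m<K. pmf (binomial_pmf K \<alpha>) m * exp_sum_CDF m c)"
proof -
  define U where "U m = {\<omega> \<in> space N. K1 \<omega> = m \<and> (\<Sum>j=1..m. g \<omega> j) \<le> c}" for m
  have [measurable]: "K1 \<in> measurable N (count_space UNIV)" "(\<lambda>\<omega>. g \<omega> i) \<in> borel_measurable N" for i
    using K1_meas distributed_measurable[OF g_exp] by auto
  have "{\<omega> \<in> space N. K1 \<omega> < K \<and> (\<Sum>j=1..K1 \<omega>. g \<omega> j) \<le> c} = (\<Union>m<K. U m)"
    by (auto simp: U_def)
  moreover have "U m \<in> events" for m
    unfolding U_def by measurable
  ultimately have "\<P>(\<omega> in N. K1 \<omega> < K \<and> (\<Sum>j=1..K1 \<omega>. g \<omega> j) \<le> c) = (\<Sum>m<K. prob (U m))"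
    by (auto intro!: finite_measure_finite_Union simp: disjoint_family_on_def U_def)
  also have "\<dots> = (\<Sum>m<K. pmf (binomial_pmf K \<alpha>) m * exp_sum_CDF m c)"
    unfolding U_def by (intro sum.cong refl prob_K1_eq_sum_le c)
  finally show ?thesis .
qed

end

theorem proposition5:
  fixes M :: "'a measure" and N :: "'b measure"
    and K :: nat and \<alpha> \<beta> :: real
    and S :: "'a \<Rightarrow> nat set" and h :: "'a \<Rightarrow> nat \<Rightarrow> nat \<Rightarrow> complex"
    and K1 :: "'b \<Rightarrow> nat" and g :: "'b \<Rightarrow> nat \<Rightarrow> real"
  assumes K: "K \<ge> 1"
    and \<alpha>: "0 < \<alpha>" "\<alpha> < 1" and \<beta>: "0 < \<beta>" "\<beta> < 1"
    \<comment> \<open>the two-phase model: random subset S and fading coefficients h\<close>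
    and M: "prob_space M"
    and S_sub: "\<And>\<omega>. \<omega> \<in> space M \<Longrightarrow> S \<omega> \<subseteq> {1..K}"
    and S_meas: "S \<in> measurable M (count_space UNIV)"
    and S_indep: "prob_space.indep_vars M (\<lambda>_. count_space UNIV) (\<lambda>k \<omega>. k \<in> S \<omega>) {1..K}"
    and S_prob: "\<And>k. k \<in> {1..K} \<Longrightarrow> measure M {\<omega> \<in> space M. k \<in> S \<omega>} = \<alpha>"
    and h_indep: "prob_space.indep_vars M (\<lambda>_. borel) (\<lambda>(j, k) \<omega>. h \<omega> j k)
                    {(j, k). j \<in> {1..K} \<and> k \<in> {1..K} \<and> j \<noteq> k}"
    and h_CN: "\<And>j k. j \<in> {1..K} \<Longrightarrow> k \<in> {1..K} \<Longrightarrow> j \<noteq> k \<Longrightarrow>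
                 CN01_distributed M (\<lambda>\<omega>. h \<omega> j k)"
    and S_h_indep: "prob_space.indep_set M
                 (sets (vimage_algebra (space M) S (count_space UNIV)))
                 (sets (vimage_algebra (space M)
                   (\<lambda>\<omega>. \<lambda>p \<in> {(j, k). j \<in> {1..K} \<and> k \<in> {1..K} \<and> j \<noteq> k}. case p of (j, k) \<Rightarrow> h \<omega> j k)
                   (PiM {(j, k). j \<in> {1..K} \<and> k \<in> {1..K} \<and> j \<noteq> k} (\<lambda>_. borel))))"
    \<comment> \<open>the auxiliary unicasting model: K1 ~ Binomial(K, alpha), independent of i.i.d. Exp(1) g\<close>
    and N: "prob_space N"
    and K1_meas: "K1 \<in> measurable N (count_space UNIV)"
    and K1_distr: "distr N (count_space UNIV) K1 = measure_pmf (binomial_pmf K \<alpha>)"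
    and g_indep: "prob_space.indep_vars N (\<lambda>_. borel) (\<lambda>i \<omega>. g \<omega> i) UNIV"
    and g_exp: "\<And>i. distributed N lborel (\<lambda>\<omega>. g \<omega> i) (\<lambda>x. ennreal (exponential_density 1 x))"
    and K1_g_indep: "prob_space.indep_set N
                 (sets (vimage_algebra (space N) K1 (count_space UNIV)))
                 (sets (vimage_algebra (space N) g (PiM UNIV (\<lambda>_. borel))))"
  shows "measure M {\<omega> \<in> space M. \<exists>k \<in> {1..K} - S \<omega>.
              (1 / (\<alpha> * real K)) * (\<Sum>j \<in> S \<omega>. (cmod (h \<omega> j k))\<^sup>2) \<le> 1 - \<beta>}
           \<le> real K * measure N {\<omega> \<in> space N. K1 \<omega> < K \<and>
              (1 / (\<alpha> * real K)) * (\<Sum>j = 1..K1 \<omega>. g \<omega> j) \<le> 1 - \<beta>}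
       \<and> (\<forall>\<epsilon>. 0 < \<epsilon> \<and> \<epsilon> < \<beta> \<longrightarrow>
            measure M {\<omega> \<in> space M. \<exists>k \<in> {1..K} - S \<omega>.
              (1 / (\<alpha> * real K)) * (\<Sum>j \<in> S \<omega>. (cmod (h \<omega> j k))\<^sup>2) \<le> 1 - \<beta>}
            \<le> real K * (exp (- \<alpha> * real K * \<epsilon>\<^sup>2 / 4) + exp (\<alpha> * real K * gamma_fn \<beta> \<epsilon>)))"
proof -
  interpret multicast: multicast_model M K \<alpha> S h
    by (rule multicast_model.intro[OF M], unfold_locales) (use assms in \<open>auto simp: links_def\<close>)
  interpret unicast: unicast_model N K \<alpha> K1 g
    by (rule unicast_model.intro[OF N], unfold_locales) (use assms in auto)
  define c where "c = (1 - \<beta>) * \<alpha> * real K"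
  have "0 \<le> c"
    using \<alpha> \<beta> by (simp add: c_def)
  have rescale: "(1 / (\<alpha> * real K)) * x \<le> 1 - \<beta> \<longleftrightarrow> x \<le> c" for x
    using \<alpha> K by (simp add: c_def field_simps)
  note multicast = multicast.multicast_outage_le[OF \<open>0 \<le> c\<close>]
  have explicit: "(\<Sum>m<K. pmf (binomial_pmf K \<alpha>) m * exp_sum_CDF m c)
      \<le> exp (- \<alpha> * real K * \<epsilon>\<^sup>2 / 4) + exp (\<alpha> * real K * gamma_fn \<beta> \<epsilon>)"
    if "0 < \<epsilon>" "\<epsilon> < \<beta>" for \<epsilon>
    unfolding c_def
    by (rule order_trans[OF sum_binomial_pmf_exp_sum_CDF_le add_right_mono]) (use that K \<alpha> \<beta> in auto)
  show ?thesis
    unfolding rescale unicast.unicast_outage_eq[OF \<open>0 \<le> c\<close>]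
    using multicast order_trans[OF multicast mult_left_mono[OF explicit]] by simp
qed

end
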